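(* Let $N\ge2$, $T\ge1$, $\alpha\in(0,1)$, let $S_\alpha(p)=\frac{1}{1-\alpha}\big(1-\sum_{i=1}^N p_i^\alpha\big)$ for $p\in\Delta_N$, and let $\tilde\Phi(G)=\max_{p\in\Delta_N}\{\langle p,G\rangle-\eta S_\alpha(p)\}$ with $\eta=\sqrt{\frac{T(1-\alpha)}{2\alpha}}\,N^{\alpha-\frac12}$. Then for every loss sequence $g_1,\dots,g_T\in[-1,0]^N$ fixed in advance, GBPA$(\tilde\Phi)$ satisfies \[\mathbb{E}\,\mathrm{Regret}_T\le\sqrt{\frac{2TN}{\alpha(1-\alpha)}}.\] In particular, for $\alpha=\frac12$ the expected regret is at most $2\sqrt{2TN}$.
   Context: $\Delta_N$ is the probability simplex in $\mathbb{R}^N$, $e_i$ the standard basis vector. Algorithm GBPA$(\tilde\Phi)$: set $\hat G_0=0$; for $t=1,\dots,T$: sample arm $i_t$ according to $p_t=\nabla\tilde\Phi(\hat G_{t-1})$; incur and observe only $g_{t,i_t}$; set $\hat G_t=\hat G_{t-1}+\frac{g_{t,i_t}}{p_{t,i_t}}e_{i_t}$. Regret is $\mathrm{Regret}_T=\max_{i}\sum_{t=1}^T(g_{t,i}-g_{t,i_t})$ and the expectation is over the algorithm's sampling. *)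

theory Defs
  imports "HOL-Analysis.Analysis"
begin

text \<open>Arms are indexed by a finite type 'n, so N = CARD('n). Vectors in R^N are real^'n.\<close>

definition prob_simplex :: "(real^'n) set" where
  "prob_simplex = {p. (\<forall>i. 0 \<le> p $ i) \<and> (\<Sum>i\<in>UNIV. p $ i) = 1}"

definition tsallis :: "real \<Rightarrow> real^'n \<Rightarrow> real" where
  "tsallis \<alpha> p = (1 - (\<Sum>i\<in>UNIV. (p $ i) powr \<alpha>)) / (1 - \<alpha>)"

definition tsallis_potential :: "real \<Rightarrow> real \<Rightarrow> real^'n \<Rightarrow> real" where
  "tsallis_potential \<eta> \<alpha> G = Sup ((\<lambda>p. p \<bullet> G - \<eta> * tsallis \<alpha> p) ` prob_simplex)"

definition grad :: "(real^'n \<Rightarrow> real) \<Rightarrow> real^'n \<Rightarrow> real^'n" where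
  "grad f x = (\<chi> i. frechet_derivative f (at x) (axis i 1))"

text \<open>GBPA estimated cumulative gain vector after t rounds, given the sequence of
  played arms I (I t = arm played in round t, t \<ge> 1), losses g, and potential Phi.\<close>
fun gbpa_Ghat :: "(real^'n \<Rightarrow> real) \<Rightarrow> (nat \<Rightarrow> real^'n) \<Rightarrow> (nat \<Rightarrow> 'n) \<Rightarrow> nat \<Rightarrow> real^'n" where
  "gbpa_Ghat \<Phi> g I 0 = 0"
| "gbpa_Ghat \<Phi> g I (Suc t) =
     gbpa_Ghat \<Phi> g I t
     + (g (Suc t) $ I (Suc t) / grad \<Phi> (gbpa_Ghat \<Phi> g I t) $ I (Suc t)) *\<^sub>R axis (I (Suc t)) 1"

text \<open>Probability that GBPA plays the arm sequence I(1),...,I(T).\<close>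
definition gbpa_path_prob :: "(real^'n \<Rightarrow> real) \<Rightarrow> (nat \<Rightarrow> real^'n) \<Rightarrow> nat \<Rightarrow> (nat \<Rightarrow> 'n) \<Rightarrow> real" where
  "gbpa_path_prob \<Phi> g T I = (\<Prod>t\<in>{1..T}. grad \<Phi> (gbpa_Ghat \<Phi> g I (t - 1)) $ I t)"

definition regret :: "(nat \<Rightarrow> real^'n) \<Rightarrow> nat \<Rightarrow> (nat \<Rightarrow> 'n) \<Rightarrow> real" where
  "regret g T I = (MAX i\<in>UNIV. (\<Sum>t\<in>{1..T}. g t $ i - g t $ I t))"

definition gbpa_expected_regret :: "(real^'n \<Rightarrow> real) \<Rightarrow> (nat \<Rightarrow> real^'n) \<Rightarrow> nat \<Rightarrow> real" where
  "gbpa_expected_regret \<Phi> g T =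
     (\<Sum>I\<in>PiE {1..T} (\<lambda>_. (UNIV :: 'n set)). gbpa_path_prob \<Phi> g T I * regret g T I)"

end

theory Submission
  imports Defs
begin

text \<open>The maximiser \<open>\<pi> G\<close> of the smoothed potential is its gradient, so GBPA samples from it.
  Around a KKT point the objective differs from its maximum by \<open>\<eta>/(1-\<alpha>)\<close> times the Bregman
  divergence of the concave powers \<open>t powr \<alpha>\<close>; bounding that divergence from below by a second-order
  term gives \<open>\<Phi>(G + h) \<le> \<Phi> G + \<pi> G \<bullet> h + \<Sum>j. h j\<^sup>2 \<pi> j powr (2 - \<alpha>) / (2 \<eta> \<alpha>)\<close> for losses \<open>h \<le> 0\<close>.
  The importance-weighted estimate is unbiased, so the expected regret against the best arm \<open>k\<close> is
  at most the expectation of \<open>\<Phi>(\<hat>G\<^sub>T) - \<Sum>\<^sub>t g\<^sub>t(i\<^sub>t)\<close>, using \<open>\<hat>G\<^sub>T k \<le> \<Phi>(\<hat>G\<^sub>T)\<close>.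
  Per round this quantity grows in expectation by at most \<open>\<Sum>i. \<pi> i powr (1 - \<alpha>) / (2 \<eta> \<alpha>) \<le> N\<^sup>\<alpha> / (2 \<eta> \<alpha>)\<close>,
  and it starts at \<open>\<Phi> 0 \<le> \<eta> N powr (1 - \<alpha>) / (1 - \<alpha>)\<close>; the choice of \<open>\<eta>\<close> balances the two terms.\<close>

definition powr_bregman :: "real \<Rightarrow> real \<Rightarrow> real \<Rightarrow> real" where
  "powr_bregman \<gamma> u v = v powr \<gamma> - u powr \<gamma> + \<gamma> * v powr (\<gamma> - 1) * (u - v)"

lemma powr_bregman_taylor:
  assumes "0 < u" "0 < v"
  shows "\<exists>t. min u v \<le> t \<and> t \<le> max u v \<and>
           powr_bregman \<gamma> u v = \<gamma> * (1 - \<gamma>) / 2 * t powr (\<gamma> - 2) * (u - v)\<^sup>2"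
proof (cases "u = v")
  case True
  then show ?thesis by (intro exI[of _ v]) (simp add: powr_bregman_def)
next
  case False
  define f where "f = (\<lambda>m::nat. \<lambda>t::real. if m = 0 then t powr \<gamma>
      else if m = 1 then \<gamma> * t powr (\<gamma> - 1) else \<gamma> * ((\<gamma> - 1) * t powr (\<gamma> - 1 - 1)))"
  have f_deriv: "\<forall>m t. m < 2 \<and> min u v \<le> t \<and> t \<le> max u v \<longrightarrow> DERIV (f m) t :> f (Suc m) t"
  proof (intro allI impI)
    fix m :: nat and t :: real
    assume m_t: "m < 2 \<and> min u v \<le> t \<and> t \<le> max u v"
    then have "t > 0" using assms by linarith
    with m_t show "DERIV (f m) t :> f (Suc m) t"
      using has_real_derivative_powr[of t \<gamma>]
        DERIV_cmult[OF has_real_derivative_powr[of t "\<gamma> - 1"], of \<gamma>]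
      by (cases "m = 0") (auto simp: f_def less_2_cases_iff)
  qed
  obtain t where t: "if u < v then u < t \<and> t < v else v < t \<and> t < u"
    and taylor: "u powr \<gamma> = (\<Sum>m<2. f m v / fact m * (u - v) ^ m) + f 2 t / fact 2 * (u - v) ^ 2"
    using Taylor[of 2 f "\<lambda>t. t powr \<gamma>" "min u v" "max u v" v u, OF _ _ f_deriv] False
    by (auto simp: f_def)
  from taylor have "u powr \<gamma> = v powr \<gamma> + \<gamma> * v powr (\<gamma> - 1) * (u - v)
      + \<gamma> * (\<gamma> - 1) * t powr (\<gamma> - 2) / 2 * (u - v)\<^sup>2"
    by (simp add: f_def numeral_2_eq_2 algebra_simps)
  then have "powr_bregman \<gamma> u v = \<gamma> * (1 - \<gamma>) / 2 * t powr (\<gamma> - 2) * (u - v)\<^sup>2"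
    unfolding powr_bregman_def by (simp add: field_simps)
  moreover have "min u v \<le> t \<and> t \<le> max u v" using t by (auto split: if_splits)
  ultimately show ?thesis by blast
qed

lemma powr_bregman_ge:
  assumes "0 < \<gamma>" "\<gamma> < 1" "0 \<le> u" "0 < v"
  shows "\<gamma> * (1 - \<gamma>) / 2 * max u v powr (\<gamma> - 2) * (u - v)\<^sup>2 \<le> powr_bregman \<gamma> u v"
proof (cases "u = 0")
  case True
  have "v powr (\<gamma> - 2) * v\<^sup>2 = v powr \<gamma>"
    using \<open>0 < v\<close> by (simp add: powr_diff powr_numeral)
  moreover have "powr_bregman \<gamma> 0 v = (1 - \<gamma>) * v powr \<gamma>"
    using \<open>0 < v\<close> by (simp add: powr_bregman_def powr_diff algebra_simps)
  moreover have "\<gamma> / 2 * ((1 - \<gamma>) * v powr \<gamma>) \<le> 1 * ((1 - \<gamma>) * v powr \<gamma>)"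
    using assms by (intro mult_right_mono) auto
  ultimately show ?thesis
    using True \<open>0 < v\<close> by (simp add: max_def field_simps)
next
  case False
  then have "0 < u" using assms by simp
  then obtain t where t: "min u v \<le> t" "t \<le> max u v"
    and eq: "powr_bregman \<gamma> u v = \<gamma> * (1 - \<gamma>) / 2 * t powr (\<gamma> - 2) * (u - v)\<^sup>2"
    using powr_bregman_taylor[OF _ \<open>0 < v\<close>] by blast
  have "max u v powr (\<gamma> - 2) \<le> t powr (\<gamma> - 2)"
    using t \<open>0 < u\<close> \<open>0 < v\<close> \<open>\<gamma> < 1\<close> by (intro powr_mono2') auto
  then show ?thesis
    unfolding eq using assms by (intro mult_right_mono mult_left_mono) auto
qed

lemma powr_bregman_nonneg:
  assumes "0 < \<gamma>" "\<gamma> < 1" "0 \<le> u" "0 < v"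
  shows "0 \<le> powr_bregman \<gamma> u v"
proof -
  have "0 \<le> \<gamma> * (1 - \<gamma>) / 2 * max u v powr (\<gamma> - 2) * (u - v)\<^sup>2" using assms by simp
  then show ?thesis using powr_bregman_ge[OF assms] by linarith
qed

lemma linear_minus_square_le:
  fixes a d x :: real
  assumes "0 < a"
  shows "d * x - a * d\<^sup>2 \<le> x\<^sup>2 / (4 * a)"
proof -
  have "(d * x - a * d\<^sup>2) * (4 * a) = x\<^sup>2 - (2 * a * d - x)\<^sup>2"
    by (simp add: power2_eq_square algebra_simps)
  also have "\<dots> \<le> x\<^sup>2" by simp
  finally show ?thesis using assms by (simp add: pos_le_divide_eq)
qed

lemma powr_bregman_penalty_le:
  assumes "0 < \<gamma>" "\<gamma> < 1" "0 \<le> u" "0 < v" "0 < \<eta>"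
  shows "(u - v) * x - \<eta> / (1 - \<gamma>) * powr_bregman \<gamma> u v
           \<le> x\<^sup>2 * max u v powr (2 - \<gamma>) / (2 * \<eta> * \<gamma>)"
proof -
  define m where "m = max u v"
  have m: "0 < m" using assms by (simp add: m_def)
  define a where "a = \<eta> * \<gamma> / 2 * m powr (\<gamma> - 2)"
  have a: "0 < a" using assms m by (simp add: a_def)
  have "\<eta> / (1 - \<gamma>) * (\<gamma> * (1 - \<gamma>) / 2 * m powr (\<gamma> - 2) * (u - v)\<^sup>2)
      \<le> \<eta> / (1 - \<gamma>) * powr_bregman \<gamma> u v"
    using powr_bregman_ge[OF assms(1-4)] assms by (intro mult_left_mono) (auto simp: m_def)
  then have "a * (u - v)\<^sup>2 \<le> \<eta> / (1 - \<gamma>) * powr_bregman \<gamma> u v"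
    using assms by (simp add: a_def)
  then have "(u - v) * x - \<eta> / (1 - \<gamma>) * powr_bregman \<gamma> u v \<le> (u - v) * x - a * (u - v)\<^sup>2"
    by linarith
  also have "\<dots> \<le> x\<^sup>2 / (4 * a)" using a by (rule linear_minus_square_le)
  also have "\<dots> = x\<^sup>2 * m powr (2 - \<gamma>) / (2 * \<eta> * \<gamma>)"
    using m by (simp add: a_def powr_diff powr_numeral field_simps)
  finally show ?thesis unfolding m_def .
qed

lemma powr_bregman_penalty_le_nonpos:
  assumes "0 < \<gamma>" "\<gamma> < 1" "0 \<le> u" "0 < v" "0 < \<eta>" "x \<le> 0"
  shows "(u - v) * x - \<eta> / (1 - \<gamma>) * powr_bregman \<gamma> u v
           \<le> x\<^sup>2 * v powr (2 - \<gamma>) / (2 * \<eta> * \<gamma>)"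
proof (cases "u \<le> v")
  case True
  then show ?thesis using powr_bregman_penalty_le[OF assms(1-5)] by (simp add: max_def)
next
  case False
  then have "(u - v) * x \<le> 0" using \<open>x \<le> 0\<close> by (simp add: mult_nonneg_nonpos)
  moreover have "0 \<le> \<eta> / (1 - \<gamma>) * powr_bregman \<gamma> u v"
    using powr_bregman_nonneg[OF assms(1-4)] assms by simp
  moreover have "0 \<le> x\<^sup>2 * v powr (2 - \<gamma>) / (2 * \<eta> * \<gamma>)" using assms by simp
  ultimately show ?thesis by linarith
qed

lemma prob_simplex_nth_le_one:
  assumes "p \<in> prob_simplex"
  shows "0 \<le> p $ i" "p $ i \<le> 1"
proof -
  have nonneg: "\<forall>j. 0 \<le> p $ j" and sum: "(\<Sum>j\<in>UNIV. p $ j) = 1"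
    using assms by (auto simp: prob_simplex_def)
  show "0 \<le> p $ i" using nonneg by simp
  have "p $ i \<le> (\<Sum>j\<in>UNIV. p $ j)" using nonneg by (intro member_le_sum) auto
  then show "p $ i \<le> 1" using sum by simp
qed

text \<open>Concavity of \<open>t powr \<gamma>\<close>, through its tangent at the uniform weight \<open>1/N\<close>.\<close>

lemma prob_simplex_sum_powr_le:
  fixes p :: "real^'n"
  assumes "p \<in> prob_simplex" "0 < \<gamma>" "\<gamma> < 1"
  shows "(\<Sum>i\<in>UNIV. p $ i powr \<gamma>) \<le> real CARD('n) powr (1 - \<gamma>)"
proof -
  define N where "N = real CARD('n)"
  have N: "1 \<le> N" unfolding N_def by (simp add: Suc_le_eq)
  define v where "v = 1 / N"
  have v: "0 < v" using N by (simp add: v_def)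
  have "p $ i powr \<gamma> \<le> v powr \<gamma> + \<gamma> * v powr (\<gamma> - 1) * (p $ i - v)" for i
    using powr_bregman_nonneg[OF assms(2,3) prob_simplex_nth_le_one(1)[OF assms(1), of i] v]
    unfolding powr_bregman_def by linarith
  then have "(\<Sum>i\<in>UNIV. p $ i powr \<gamma>) \<le> (\<Sum>i\<in>UNIV. v powr \<gamma> + \<gamma> * v powr (\<gamma> - 1) * (p $ i - v))"
    by (intro sum_mono)
  also have "\<dots> = N * v powr \<gamma> + \<gamma> * v powr (\<gamma> - 1) * ((\<Sum>i\<in>UNIV. p $ i) - N * v)"
    by (simp add: sum.distrib sum_subtractf N_def flip: sum_distrib_left)
  also have "\<dots> = N powr (1 - \<gamma>)"
    using assms(1) N by (simp add: prob_simplex_def v_def powr_divide powr_diff)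
  finally show ?thesis unfolding N_def .
qed

definition tsallis_objective :: "real \<Rightarrow> real \<Rightarrow> real^'n \<Rightarrow> real^'n \<Rightarrow> real" where
  "tsallis_objective \<eta> \<alpha> G q = q \<bullet> G - \<eta> * tsallis \<alpha> q"

definition tsallis_kkt :: "real \<Rightarrow> real \<Rightarrow> real^'n \<Rightarrow> real^'n \<Rightarrow> bool" where
  "tsallis_kkt \<eta> \<alpha> G p \<longleftrightarrow> p \<in> prob_simplex \<and> (\<forall>j. 0 < p $ j) \<and>
     (\<exists>l. \<forall>j. G $ j + \<eta> * \<alpha> / (1 - \<alpha>) * p $ j powr (\<alpha> - 1) = l)"

lemma divide_powr_le_inverse:
  fixes K e N d :: real
  assumes "0 < K" "0 < e" "0 < N" "K * N powr (1 / e) \<le> d"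
  shows "(K / d) powr e \<le> 1 / N"
proof -
  have "0 < K * N powr (1 / e)" using assms by simp
  then have "0 < d" using assms(4) by linarith
  have "K / d \<le> K / (K * N powr (1 / e))"
  proof (rule divide_left_mono[OF assms(4)])
    show "0 \<le> K" using assms(1) by simp
    show "0 < d * (K * N powr (1 / e))" using \<open>0 < d\<close> \<open>0 < K * N powr (1 / e)\<close> by simp
  qed
  also have "\<dots> = N powr (- (1 / e))" using assms by (simp add: powr_minus_divide)
  finally have "(K / d) powr e \<le> (N powr (- (1 / e))) powr e"
    using assms \<open>0 < d\<close> by (intro powr_mono2) auto
  also have "\<dots> = N powr (- (1 / e) * e)" by (rule powr_powr)
  also have "\<dots> = 1 / N" using assms by (simp add: powr_minus_divide)
  finally show ?thesis .
qed

lemma exists_level_sum_powr_eq_one: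
  fixes G :: "real^'n"
  assumes K: "0 < K" and e: "0 < e"
  shows "\<exists>l. (\<forall>j. K \<le> l - G $ j) \<and> (\<Sum>j\<in>UNIV. (K / (l - G $ j)) powr e) = 1"
proof -
  define N where "N = real CARD('n)"
  have N: "1 \<le> N" unfolding N_def by (simp add: Suc_le_eq)
  define m where "m = Max (range (\<lambda>j. G $ j))"
  have G_le_m: "G $ j \<le> m" for j unfolding m_def by (intro Max_ge) auto
  have "m \<in> range (\<lambda>j. G $ j)" unfolding m_def by (intro Max_in) auto
  then obtain j0 where j0: "G $ j0 = m" by auto
  define \<sigma> where "\<sigma> = (\<lambda>l. \<Sum>j\<in>UNIV. (K / (l - G $ j)) powr e)"
  define l0 where "l0 = m + K"
  define l1 where "l1 = m + K * N powr (1 / e)"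
  have l0_le_l1: "l0 \<le> l1"
    unfolding l0_def l1_def using K N e by (simp add: ge_one_powr_ge_zero)
  have gap: "K \<le> l - G $ j" if "l0 \<le> l" for l j
    using that G_le_m[of j] by (simp add: l0_def)
  have above: "G $ j < x" if "l0 \<le> x" for x j
    using gap[OF that, of j] K by simp
  have "continuous_on {l0..l1} \<sigma>"
    unfolding \<sigma>_def using K by (intro continuous_intros) (auto dest: above)
  moreover have "1 \<le> \<sigma> l0"
  proof -
    have "(K / (l0 - G $ j0)) powr e = 1" using j0 K by (simp add: l0_def)
    moreover have "(K / (l0 - G $ j0)) powr e \<le> \<sigma> l0"
      unfolding \<sigma>_def by (intro member_le_sum) auto
    ultimately show ?thesis by simp
  qed
  moreover have "\<sigma> l1 \<le> 1"
  proof -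
    have "K * N powr (1 / e) \<le> l1 - G $ j" for j using G_le_m[of j] by (simp add: l1_def)
    then have "(K / (l1 - G $ j)) powr e \<le> 1 / N" for j
      using K e N by (intro divide_powr_le_inverse) auto
    then have "\<sigma> l1 \<le> N * (1 / N)" unfolding \<sigma>_def N_def by (intro sum_bounded_above) auto
    then show ?thesis using N by simp
  qed
  ultimately obtain l where "l0 \<le> l" "\<sigma> l = 1"
    using IVT2'[of \<sigma> l1 1 l0] l0_le_l1 by auto
  then show ?thesis using gap unfolding \<sigma>_def by blast
qed

text \<open>The first-order conditions give \<open>p j = (K / (l - G j)) powr (1/(1-\<alpha>))\<close> with
  \<open>K = \<eta> \<alpha> / (1 - \<alpha>)\<close>; the multiplier \<open>l\<close> is fixed by normalisation.\<close>

lemma tsallis_kkt_exists: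
  fixes G :: "real^'n"
  assumes "0 < \<eta>" "0 < \<alpha>" "\<alpha> < 1"
  shows "\<exists>p. tsallis_kkt \<eta> \<alpha> G p"
proof -
  define K where "K = \<eta> * \<alpha> / (1 - \<alpha>)"
  define e where "e = 1 / (1 - \<alpha>)"
  have K: "0 < K" and e: "0 < e" using assms by (simp_all add: K_def e_def)
  obtain l where gap: "\<And>j. K \<le> l - G $ j" and sum: "(\<Sum>j\<in>UNIV. (K / (l - G $ j)) powr e) = 1"
    using exists_level_sum_powr_eq_one[OF K e] by blast
  define p where "p = (\<chi> j. (K / (l - G $ j)) powr e)"
  have pos: "0 < p $ j" for j
    using gap[of j] K by (simp add: p_def)
  have "G $ j + K * p $ j powr (\<alpha> - 1) = l" for j
  proof -
    have "p $ j powr (\<alpha> - 1) = (K / (l - G $ j)) powr (e * (\<alpha> - 1))"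
      by (simp add: p_def powr_powr)
    also have "e * (\<alpha> - 1) = - 1" using assms by (simp add: e_def field_simps)
    also have "(K / (l - G $ j)) powr (- 1) = (l - G $ j) / K"
      using gap[of j] K by (simp add: powr_minus_divide)
    finally show ?thesis using K by simp
  qed
  then have "tsallis_kkt \<eta> \<alpha> G p"
    using pos sum unfolding tsallis_kkt_def prob_simplex_def K_def p_def
    by (auto intro: less_imp_le)
  then show ?thesis ..
qed

lemma tsallis_objective_eq_sum:
  "tsallis_objective \<eta> \<alpha> G q = (\<Sum>j\<in>UNIV. q $ j * G $ j + \<eta> / (1 - \<alpha>) * q $ j powr \<alpha>) - \<eta> / (1 - \<alpha>)"
proof -
  have "\<eta> * tsallis \<alpha> q = \<eta> / (1 - \<alpha>) - \<eta> / (1 - \<alpha>) * (\<Sum>j\<in>UNIV. q $ j powr \<alpha>)"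
    unfolding tsallis_def by (simp add: diff_divide_distrib right_diff_distrib)
  then show ?thesis
    unfolding tsallis_objective_def inner_vec_def by (simp add: sum.distrib sum_distrib_left mult.commute)
qed

text \<open>At a KKT point the linear terms cancel against the multiplier, leaving the Bregman remainder.\<close>

lemma tsallis_objective_kkt_eq:
  assumes "\<alpha> < 1" "tsallis_kkt \<eta> \<alpha> G p" "q \<in> prob_simplex"
  shows "tsallis_objective \<eta> \<alpha> G q
           = tsallis_objective \<eta> \<alpha> G p - \<eta> / (1 - \<alpha>) * (\<Sum>j\<in>UNIV. powr_bregman \<alpha> (q $ j) (p $ j))"
proof -
  define c where "c = \<eta> / (1 - \<alpha>)"
  obtain l where kkt: "\<And>j. G $ j + \<eta> * \<alpha> / (1 - \<alpha>) * p $ j powr (\<alpha> - 1) = l"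
    using assms(2) unfolding tsallis_kkt_def by blast
  have p_sum: "(\<Sum>j\<in>UNIV. p $ j) = 1" and q_sum: "(\<Sum>j\<in>UNIV. q $ j) = 1"
    using assms(2,3) unfolding tsallis_kkt_def prob_simplex_def by auto
  have "(q $ j - p $ j) * G $ j + c * (q $ j powr \<alpha> - p $ j powr \<alpha>)
      = (q $ j - p $ j) * l - c * powr_bregman \<alpha> (q $ j) (p $ j)" for j
  proof -
    have G_j: "G $ j = l - c * \<alpha> * p $ j powr (\<alpha> - 1)" using kkt[of j] by (simp add: c_def)
    show ?thesis unfolding G_j by (simp add: powr_bregman_def algebra_simps)
  qed
  then have "(\<Sum>j\<in>UNIV. (q $ j - p $ j) * G $ j + c * (q $ j powr \<alpha> - p $ j powr \<alpha>))
      = (\<Sum>j\<in>UNIV. (q $ j - p $ j) * l - c * powr_bregman \<alpha> (q $ j) (p $ j))"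
    by simp
  also have "\<dots> = (\<Sum>j\<in>UNIV. q $ j - p $ j) * l - c * (\<Sum>j\<in>UNIV. powr_bregman \<alpha> (q $ j) (p $ j))"
    by (simp add: sum_subtractf sum_distrib_left sum_distrib_right left_diff_distrib)
  also have "(\<Sum>j\<in>UNIV. q $ j - p $ j) = 0"
    using p_sum q_sum by (simp add: sum_subtractf)
  finally have remainder: "(\<Sum>j\<in>UNIV. (q $ j - p $ j) * G $ j + c * (q $ j powr \<alpha> - p $ j powr \<alpha>))
      = - c * (\<Sum>j\<in>UNIV. powr_bregman \<alpha> (q $ j) (p $ j))"
    by simp
  have "tsallis_objective \<eta> \<alpha> G q - tsallis_objective \<eta> \<alpha> G p
      = (\<Sum>j\<in>UNIV. (q $ j - p $ j) * G $ j + c * (q $ j powr \<alpha> - p $ j powr \<alpha>))"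
    unfolding tsallis_objective_eq_sum c_def by (simp add: sum_subtractf sum.distrib algebra_simps)
  with remainder show ?thesis by (simp add: c_def)
qed

definition tsallis_argmax :: "real \<Rightarrow> real \<Rightarrow> real^'n \<Rightarrow> real^'n" where
  "tsallis_argmax \<eta> \<alpha> G = (SOME p. tsallis_kkt \<eta> \<alpha> G p)"

locale tsallis_smoothing =
  fixes \<eta> \<alpha> :: real
  assumes eta_pos: "0 < \<eta>" and alpha_pos: "0 < \<alpha>" and alpha_less_one: "\<alpha> < 1"
begin

abbreviation \<Phi> :: "real^'n \<Rightarrow> real" where
  "\<Phi> \<equiv> tsallis_potential \<eta> \<alpha>"

abbreviation \<pi> :: "real^'n \<Rightarrow> real^'n" where
  "\<pi> \<equiv> tsallis_argmax \<eta> \<alpha>"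

lemma argmax_kkt: "tsallis_kkt \<eta> \<alpha> G (\<pi> G)"
  unfolding tsallis_argmax_def
  using tsallis_kkt_exists[OF eta_pos alpha_pos alpha_less_one] by (rule someI_ex)

lemma argmax_in_simplex: "\<pi> G \<in> prob_simplex"
  using argmax_kkt unfolding tsallis_kkt_def by blast

lemma argmax_pos: "0 < \<pi> G $ j"
  using argmax_kkt unfolding tsallis_kkt_def by blast

lemma argmax_sum: "(\<Sum>j\<in>UNIV. \<pi> G $ j) = 1"
  using argmax_in_simplex unfolding prob_simplex_def by blast

lemma objective_eq_argmax:
  assumes "q \<in> prob_simplex"
  shows "tsallis_objective \<eta> \<alpha> G q = tsallis_objective \<eta> \<alpha> G (\<pi> G)
           - \<eta> / (1 - \<alpha>) * (\<Sum>j\<in>UNIV. powr_bregman \<alpha> (q $ j) (\<pi> G $ j))"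
  using tsallis_objective_kkt_eq[OF alpha_less_one argmax_kkt assms] .

lemma objective_le_argmax:
  assumes "q \<in> prob_simplex"
  shows "tsallis_objective \<eta> \<alpha> G q \<le> tsallis_objective \<eta> \<alpha> G (\<pi> G)"
proof -
  have "0 \<le> (\<Sum>j\<in>UNIV. powr_bregman \<alpha> (q $ j) (\<pi> G $ j))"
    using prob_simplex_nth_le_one(1)[OF assms]
    by (intro sum_nonneg powr_bregman_nonneg alpha_pos alpha_less_one argmax_pos)
  then show ?thesis
    using objective_eq_argmax[OF assms] eta_pos alpha_less_one by (simp add: mult_nonneg_nonneg)
qed

lemma potential_eq_objective: "\<Phi> G = tsallis_objective \<eta> \<alpha> G (\<pi> G)"
  unfolding tsallis_potential_def
proof (rule cSup_eq_maximum)
  show "tsallis_objective \<eta> \<alpha> G (\<pi> G) \<in> (\<lambda>p. p \<bullet> G - \<eta> * tsallis \<alpha> p) ` prob_simplex"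
    using argmax_in_simplex unfolding tsallis_objective_def by blast
  show "x \<le> tsallis_objective \<eta> \<alpha> G (\<pi> G)"
    if "x \<in> (\<lambda>p. p \<bullet> G - \<eta> * tsallis \<alpha> p) ` prob_simplex" for x
    using that objective_le_argmax unfolding tsallis_objective_def by blast
qed

lemma objective_le_potential: "q \<in> prob_simplex \<Longrightarrow> tsallis_objective \<eta> \<alpha> G q \<le> \<Phi> G"
  unfolding potential_eq_objective by (rule objective_le_argmax)

lemma nth_le_potential: "G $ i \<le> \<Phi> G"
proof -
  have "axis i 1 \<in> prob_simplex"
    by (auto simp: prob_simplex_def axis_def)
  moreover have "(\<Sum>j\<in>UNIV. axis i 1 $ j powr \<alpha>) = (\<Sum>j\<in>UNIV. if j = i then 1 else 0)"
    by (rule sum.cong) (auto simp: axis_def)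
  then have "tsallis_objective \<eta> \<alpha> G (axis i 1) = G $ i"
    unfolding tsallis_objective_def tsallis_def by (simp add: inner_axis')
  ultimately show ?thesis
    using objective_le_potential by metis
qed

lemma potential_zero_le: "\<Phi> (0 :: real^'n) \<le> \<eta> * real CARD('n) powr (1 - \<alpha>) / (1 - \<alpha>)"
proof -
  have "\<Phi> (0 :: real^'n) = \<eta> / (1 - \<alpha>) * ((\<Sum>i\<in>UNIV. \<pi> (0 :: real^'n) $ i powr \<alpha>) - 1)"
    unfolding potential_eq_objective tsallis_objective_def tsallis_def
    using alpha_less_one by (simp add: field_simps)
  also have "\<dots> \<le> \<eta> / (1 - \<alpha>) * real CARD('n) powr (1 - \<alpha>)"
    using prob_simplex_sum_powr_le[OF argmax_in_simplex[of "0 :: real^'n"] alpha_pos alpha_less_one] eta_pos alpha_less_one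
    by (intro mult_left_mono) auto
  finally show ?thesis by simp
qed

lemma potential_ge_linear: "\<Phi> G + \<pi> G \<bullet> h \<le> \<Phi> (G + h)"
  using objective_le_potential[OF argmax_in_simplex, of "G + h" G] potential_eq_objective[of G]
  by (simp add: tsallis_objective_def inner_add_right)

lemma potential_remainder_eq:
  "\<Phi> (G + h) - \<Phi> G - \<pi> G \<bullet> h =
    (\<Sum>j\<in>UNIV. (\<pi> (G + h) $ j - \<pi> G $ j) * h $ j
       - \<eta> / (1 - \<alpha>) * powr_bregman \<alpha> (\<pi> (G + h) $ j) (\<pi> G $ j))"
proof -
  let ?q = "\<pi> (G + h)"
  have "\<Phi> (G + h) = tsallis_objective \<eta> \<alpha> G ?q + ?q \<bullet> h"
    using potential_eq_objective[of "G + h"] by (simp add: tsallis_objective_def inner_add_right)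
  also have "tsallis_objective \<eta> \<alpha> G ?q
      = \<Phi> G - \<eta> / (1 - \<alpha>) * (\<Sum>j\<in>UNIV. powr_bregman \<alpha> (?q $ j) (\<pi> G $ j))"
    unfolding potential_eq_objective[of G] by (rule objective_eq_argmax[OF argmax_in_simplex])
  finally have "\<Phi> (G + h) - \<Phi> G - \<pi> G \<bullet> h
      = (?q - \<pi> G) \<bullet> h - \<eta> / (1 - \<alpha>) * (\<Sum>j\<in>UNIV. powr_bregman \<alpha> (?q $ j) (\<pi> G $ j))"
    by (simp add: inner_diff_left)
  then show ?thesis
    by (simp add: inner_vec_def sum_subtractf sum_distrib_left)
qed

text \<open>Strong concavity of the entropy on the simplex makes \<open>\<Phi>\<close> smooth with constant \<open>1/(\<eta>\<alpha>)\<close>.\<close>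

lemma potential_remainder_bound:
  "\<bar>\<Phi> (G + h) - \<Phi> G - \<pi> G \<bullet> h\<bar> \<le> (norm h)\<^sup>2 / (2 * \<eta> * \<alpha>)"
proof -
  let ?q = "\<pi> (G + h)" and ?p = "\<pi> G"
  have "(?q $ j - ?p $ j) * h $ j - \<eta> / (1 - \<alpha>) * powr_bregman \<alpha> (?q $ j) (?p $ j)
      \<le> (h $ j)\<^sup>2 / (2 * \<eta> * \<alpha>)" for j
  proof -
    have "0 \<le> ?q $ j" "?q $ j \<le> 1" "0 \<le> ?p $ j" "?p $ j \<le> 1"
      using prob_simplex_nth_le_one[OF argmax_in_simplex] by auto
    then have "max (?q $ j) (?p $ j) powr (2 - \<alpha>) \<le> 1"
      using alpha_less_one by (intro powr_le1) auto
    then have "(h $ j)\<^sup>2 * max (?q $ j) (?p $ j) powr (2 - \<alpha>) / (2 * \<eta> * \<alpha>) \<le> (h $ j)\<^sup>2 / (2 * \<eta> * \<alpha>)"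
      using eta_pos alpha_pos by (intro divide_right_mono mult_left_le) auto
    then show ?thesis
      using powr_bregman_penalty_le[OF alpha_pos alpha_less_one _ argmax_pos eta_pos]
        prob_simplex_nth_le_one(1)[OF argmax_in_simplex]
      by (meson order_trans)
  qed
  then have "\<Phi> (G + h) - \<Phi> G - ?p \<bullet> h \<le> (\<Sum>j\<in>UNIV. (h $ j)\<^sup>2) / (2 * \<eta> * \<alpha>)"
    unfolding potential_remainder_eq sum_divide_distrib by (intro sum_mono)
  also have "(\<Sum>j\<in>UNIV. (h $ j)\<^sup>2) = (norm h)\<^sup>2"
    by (subst power2_norm_eq_inner) (simp add: inner_vec_def power2_eq_square)
  finally show ?thesis using potential_ge_linear[of G h] by simp
qed

lemma potential_has_derivative: "(\<Phi> has_derivative (\<lambda>h. \<pi> G \<bullet> h)) (at G)"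
  unfolding has_derivative_iff_norm
proof
  show "bounded_linear (\<lambda>h. \<pi> G \<bullet> h)" by (rule bounded_linear_inner_right)
  have bound: "norm (norm (\<Phi> y - \<Phi> G - \<pi> G \<bullet> (y - G)) / norm (y - G)) \<le> norm (y - G) / (2 * \<eta> * \<alpha>)"
    for y
  proof (cases "y = G")
    case False
    then have "0 < norm (y - G)" by simp
    have "\<bar>\<Phi> y - \<Phi> G - \<pi> G \<bullet> (y - G)\<bar> / norm (y - G)
        \<le> (norm (y - G))\<^sup>2 / (2 * \<eta> * \<alpha>) / norm (y - G)"
      using potential_remainder_bound[of G "y - G"] by (intro divide_right_mono) auto
    also have "\<dots> = norm (y - G) / (2 * \<eta> * \<alpha>)"
      using \<open>0 < norm (y - G)\<close> by (simp add: power2_eq_square)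
    finally show ?thesis by simp
  qed simp
  have "((\<lambda>y. norm (y - G) / (2 * \<eta> * \<alpha>)) \<longlongrightarrow> norm (G - G) / (2 * \<eta> * \<alpha>)) (at G)"
    by (intro tendsto_divide tendsto_norm tendsto_diff tendsto_ident_at tendsto_const)
      (use eta_pos alpha_pos in auto)
  then show "((\<lambda>y. norm (\<Phi> y - \<Phi> G - \<pi> G \<bullet> (y - G)) / norm (y - G)) \<longlongrightarrow> 0) (at G)"
    by (intro Lim_null_comparison[OF always_eventually[OF allI[OF bound]]]) simp
qed

lemma grad_potential: "grad \<Phi> = \<pi>"
proof
  fix G
  have "frechet_derivative \<Phi> (at G) = (\<lambda>h. \<pi> G \<bullet> h)"
    by (rule frechet_derivative_at[OF potential_has_derivative, symmetric])
  then show "grad \<Phi> G = \<pi> G" unfolding grad_def by (simp add: vec_eq_iff inner_axis)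
qed

text \<open>For a step \<open>h \<le> 0\<close> only the curvature at \<open>\<pi> G\<close> matters: coordinates whose weight grows
  contribute a nonpositive linear term.\<close>

lemma potential_remainder_bound_nonpos:
  assumes "\<And>j. h $ j \<le> 0"
  shows "\<Phi> (G + h) - \<Phi> G - \<pi> G \<bullet> h \<le> (\<Sum>j\<in>UNIV. (h $ j)\<^sup>2 * \<pi> G $ j powr (2 - \<alpha>)) / (2 * \<eta> * \<alpha>)"
proof -
  have "(\<pi> (G + h) $ j - \<pi> G $ j) * h $ j - \<eta> / (1 - \<alpha>) * powr_bregman \<alpha> (\<pi> (G + h) $ j) (\<pi> G $ j)
      \<le> (h $ j)\<^sup>2 * \<pi> G $ j powr (2 - \<alpha>) / (2 * \<eta> * \<alpha>)" for j
    using prob_simplex_nth_le_one(1)[OF argmax_in_simplex]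
    by (rule powr_bregman_penalty_le_nonpos[OF alpha_pos alpha_less_one _ argmax_pos eta_pos assms])
  then show ?thesis
    unfolding potential_remainder_eq sum_divide_distrib by (rule sum_mono)
qed

end

lemma gbpa_Ghat_cong:
  "(\<And>r. 1 \<le> r \<Longrightarrow> r \<le> t \<Longrightarrow> I r = J r) \<Longrightarrow> gbpa_Ghat F g I t = gbpa_Ghat F g J t"
  by (induction t) simp_all

lemma gbpa_Ghat_fun_upd: "s \<le> t \<Longrightarrow> gbpa_Ghat F g (I(Suc t := i)) s = gbpa_Ghat F g I s"
  by (rule gbpa_Ghat_cong) auto

lemma gbpa_path_prob_fun_upd:
  "gbpa_path_prob F g (Suc t) (I(Suc t := i)) = gbpa_path_prob F g t I * grad F (gbpa_Ghat F g I t) $ i"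
proof -
  have "(\<Prod>s\<in>{1..t}. grad F (gbpa_Ghat F g (I(Suc t := i)) (s - 1)) $ (I(Suc t := i)) s)
      = (\<Prod>s\<in>{1..t}. grad F (gbpa_Ghat F g I (s - 1)) $ I s)"
    by (rule prod.cong) (auto simp: gbpa_Ghat_fun_upd)
  then show ?thesis unfolding gbpa_path_prob_def by (simp add: gbpa_Ghat_fun_upd)
qed

definition gbpa_expectation ::
    "(real^'n \<Rightarrow> real) \<Rightarrow> (nat \<Rightarrow> real^'n) \<Rightarrow> nat \<Rightarrow> ((nat \<Rightarrow> 'n) \<Rightarrow> real) \<Rightarrow> real" where
  "gbpa_expectation F g t H = (\<Sum>I\<in>PiE {1..t} (\<lambda>_. UNIV). gbpa_path_prob F g t I * H I)"

lemma gbpa_expectation_0: "gbpa_expectation F g 0 H = H (\<lambda>_. undefined)"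
  by (simp add: gbpa_expectation_def gbpa_path_prob_def)

lemma gbpa_expectation_add:
  "gbpa_expectation F g t (\<lambda>I. H I + K I) = gbpa_expectation F g t H + gbpa_expectation F g t K"
  by (simp add: gbpa_expectation_def sum.distrib distrib_left)

lemma gbpa_expectation_diff:
  "gbpa_expectation F g t (\<lambda>I. H I - K I) = gbpa_expectation F g t H - gbpa_expectation F g t K"
  by (simp add: gbpa_expectation_def sum_subtractf right_diff_distrib)

lemma gbpa_expectation_Suc:
  fixes H :: "(nat \<Rightarrow> 'n::finite) \<Rightarrow> real"
  shows "gbpa_expectation F g (Suc t) H
     = gbpa_expectation F g t (\<lambda>I. \<Sum>i\<in>UNIV. grad F (gbpa_Ghat F g I t) $ i * H (I(Suc t := i)))"
proof -
  let ?paths = "PiE {1..t} (\<lambda>_. UNIV :: 'n set)"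
  have paths_Suc: "PiE {1..Suc t} (\<lambda>_. UNIV) = (\<lambda>(i, I). I(Suc t := i)) ` (UNIV \<times> ?paths)"
    by (simp add: atLeastAtMostSuc_conv PiE_insert_eq)
  have inj: "inj_on (\<lambda>(i, I). I(Suc t := i)) (UNIV \<times> ?paths)"
    using inj_combinator[of "Suc t" "{1..t}" "\<lambda>_. UNIV :: 'n set"] by simp
  have "gbpa_expectation F g (Suc t) H
      = (\<Sum>(i, I)\<in>UNIV \<times> ?paths. gbpa_path_prob F g (Suc t) (I(Suc t := i)) * H (I(Suc t := i)))"
    unfolding gbpa_expectation_def paths_Suc by (subst sum.reindex[OF inj]) (simp add: case_prod_beta)
  also have "\<dots> = (\<Sum>I\<in>?paths. \<Sum>i\<in>UNIV.
      gbpa_path_prob F g (Suc t) (I(Suc t := i)) * H (I(Suc t := i)))"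
    by (subst sum.cartesian_product[symmetric]) (rule sum.swap)
  finally show ?thesis
    by (simp add: gbpa_expectation_def gbpa_path_prob_fun_upd sum_distrib_left mult.assoc)
qed

lemma regret_eq:
  "regret g T I = (MAX i\<in>UNIV. \<Sum>t\<in>{1..T}. g t $ i) - (\<Sum>t\<in>{1..T}. g t $ I t)"
  using Max_add_commute[of UNIV "\<lambda>i. \<Sum>t\<in>{1..T}. g t $ i" "- (\<Sum>t\<in>{1..T}. g t $ I t)"]
  by (simp add: regret_def sum_subtractf)

context tsallis_smoothing
begin

abbreviation E :: "(nat \<Rightarrow> real^'n) \<Rightarrow> nat \<Rightarrow> ((nat \<Rightarrow> 'n) \<Rightarrow> real) \<Rightarrow> real" where
  "E \<equiv> gbpa_expectation \<Phi>"

lemma expectation_Suc: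
  "E g (Suc t) H = E g t (\<lambda>I. \<Sum>i\<in>UNIV. \<pi> (gbpa_Ghat \<Phi> g I t) $ i * H (I(Suc t := i)))"
  using gbpa_expectation_Suc[of \<Phi> g t H] by (simp add: grad_potential)

lemma expectation_const: "E g t (\<lambda>_. c) = c"
  by (induction t) (simp_all add: gbpa_expectation_0 expectation_Suc argmax_sum flip: sum_distrib_right)

lemma expectation_mono:
  assumes "\<And>I. I \<in> PiE {1..t} (\<lambda>_. UNIV) \<Longrightarrow> H I \<le> K I"
  shows "E g t H \<le> E g t K"
  unfolding gbpa_expectation_def gbpa_path_prob_def grad_potential
  using assms argmax_pos by (intro sum_mono mult_left_mono prod_nonneg) (auto intro: less_imp_le)

lemma gbpa_Ghat_Suc_fun_upd:
  "gbpa_Ghat \<Phi> g (I(Suc t := i)) (Suc t)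
     = gbpa_Ghat \<Phi> g I t + (g (Suc t) $ i / \<pi> (gbpa_Ghat \<Phi> g I t) $ i) *\<^sub>R axis i 1"
  by (simp add: gbpa_Ghat_fun_upd grad_potential)

lemma expectation_Ghat: "E g t (\<lambda>I. gbpa_Ghat \<Phi> g I t $ j) = (\<Sum>s\<in>{1..t}. g s $ j)"
proof (induction t)
  case (Suc t)
  have "(\<Sum>i\<in>UNIV. \<pi> G $ i * (G + (g (Suc t) $ i / \<pi> G $ i) *\<^sub>R axis i 1) $ j)
      = G $ j + g (Suc t) $ j" for G
  proof -
    have "(\<Sum>i\<in>UNIV. \<pi> G $ i * (G + (g (Suc t) $ i / \<pi> G $ i) *\<^sub>R axis i 1) $ j)
        = (\<Sum>i\<in>UNIV. \<pi> G $ i * G $ j + (if i = j then g (Suc t) $ j else 0))"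
      using argmax_pos[of G] by (intro sum.cong) (auto simp: axis_def distrib_left less_imp_neq[symmetric])
    then show ?thesis by (simp add: sum.distrib argmax_sum flip: sum_distrib_right)
  qed
  then have "E g (Suc t) (\<lambda>I. gbpa_Ghat \<Phi> g I (Suc t) $ j)
      = E g t (\<lambda>I. gbpa_Ghat \<Phi> g I t $ j + g (Suc t) $ j)"
    unfolding expectation_Suc gbpa_Ghat_Suc_fun_upd by simp
  then show ?case by (simp add: gbpa_expectation_add expectation_const Suc.IH)
qed (simp add: gbpa_expectation_0)

lemma potential_axis_step_le:
  assumes "x \<le> 0"
  shows "\<Phi> (G + x *\<^sub>R axis i 1) \<le> \<Phi> G + x * \<pi> G $ i + x\<^sup>2 * \<pi> G $ i powr (2 - \<alpha>) / (2 * \<eta> * \<alpha>)"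
proof -
  have "(\<Sum>j\<in>UNIV. ((x *\<^sub>R axis i 1) $ j)\<^sup>2 * \<pi> G $ j powr (2 - \<alpha>))
      = (\<Sum>j\<in>UNIV. if j = i then x\<^sup>2 * \<pi> G $ i powr (2 - \<alpha>) else 0)"
    by (rule sum.cong) (auto simp: axis_def)
  moreover have "(x *\<^sub>R axis i (1 :: real)) $ j \<le> 0" for j using assms by (simp add: axis_def)
  ultimately show ?thesis
    using potential_remainder_bound_nonpos[of "x *\<^sub>R axis i 1" G] by (simp add: inner_axis)
qed

text \<open>The second-order term \<open>(v i / \<pi> i)\<^sup>2 \<pi> i powr (2 - \<alpha>)\<close> of the estimate, weighted by
  \<open>\<pi> i\<close>, is \<open>v i\<^sup>2 \<pi> i powr (1 - \<alpha>)\<close>.\<close>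

lemma potential_drift:
  fixes G v :: "real^'n"
  assumes v: "\<And>i. -1 \<le> v $ i \<and> v $ i \<le> 0"
  shows "(\<Sum>i\<in>UNIV. \<pi> G $ i * (\<Phi> (G + (v $ i / \<pi> G $ i) *\<^sub>R axis i 1) - v $ i))
          \<le> \<Phi> G + real CARD('n) powr \<alpha> / (2 * \<eta> * \<alpha>)"
proof -
  have "\<pi> G $ i * (\<Phi> (G + (v $ i / \<pi> G $ i) *\<^sub>R axis i 1) - v $ i)
      \<le> \<pi> G $ i * \<Phi> G + \<pi> G $ i powr (1 - \<alpha>) / (2 * \<eta> * \<alpha>)" for i
  proof -
    define p where "p = \<pi> G $ i"
    define x where "x = v $ i / p"
    have p: "0 < p" unfolding p_def by (rule argmax_pos)
    have "x \<le> 0" using v[of i] p by (simp add: x_def divide_nonpos_pos)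
    then have "\<Phi> (G + x *\<^sub>R axis i 1) - v $ i \<le> \<Phi> G + x\<^sup>2 * p powr (2 - \<alpha>) / (2 * \<eta> * \<alpha>)"
      using potential_axis_step_le[of x G i] p by (simp add: x_def p_def)
    then have "p * (\<Phi> (G + x *\<^sub>R axis i 1) - v $ i)
        \<le> p * (\<Phi> G + x\<^sup>2 * p powr (2 - \<alpha>) / (2 * \<eta> * \<alpha>))"
      using p by (intro mult_left_mono) auto
    also have "\<dots> = p * \<Phi> G + (v $ i)\<^sup>2 * p powr (1 - \<alpha>) / (2 * \<eta> * \<alpha>)"
    proof -
      have "p powr (2 - \<alpha>) = p powr (1 + (1 - \<alpha>))" by simp
      also have "\<dots> = p powr 1 * p powr (1 - \<alpha>)" by (rule powr_add)
      also have "p powr 1 = p" using p by simp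
      finally show ?thesis using p by (simp add: x_def field_simps power2_eq_square)
    qed
    also have "(v $ i)\<^sup>2 * p powr (1 - \<alpha>) / (2 * \<eta> * \<alpha>) \<le> 1 * p powr (1 - \<alpha>) / (2 * \<eta> * \<alpha>)"
      using v[of i] eta_pos alpha_pos
      by (intro divide_right_mono mult_right_mono) (auto simp: abs_square_le_1)
    finally show ?thesis unfolding p_def x_def by simp
  qed
  then have "(\<Sum>i\<in>UNIV. \<pi> G $ i * (\<Phi> (G + (v $ i / \<pi> G $ i) *\<^sub>R axis i 1) - v $ i))
      \<le> (\<Sum>i\<in>UNIV. \<pi> G $ i * \<Phi> G + \<pi> G $ i powr (1 - \<alpha>) / (2 * \<eta> * \<alpha>))"
    by (rule sum_mono)
  also have "\<dots> = \<Phi> G + (\<Sum>i\<in>UNIV. \<pi> G $ i powr (1 - \<alpha>)) / (2 * \<eta> * \<alpha>)"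
    by (simp add: sum.distrib argmax_sum sum_divide_distrib flip: sum_distrib_right)
  also have "\<dots> \<le> \<Phi> G + real CARD('n) powr (1 - (1 - \<alpha>)) / (2 * \<eta> * \<alpha>)"
    using prob_simplex_sum_powr_le[OF argmax_in_simplex, of "1 - \<alpha>"] alpha_pos alpha_less_one eta_pos
    by (intro add_left_mono divide_right_mono) auto
  finally show ?thesis by simp
qed

lemma conditional_potential_drift:
  fixes g :: "nat \<Rightarrow> real^'n"
  assumes "\<And>i. -1 \<le> g (Suc t) $ i \<and> g (Suc t) $ i \<le> 0"
  shows "(\<Sum>i\<in>UNIV. \<pi> (gbpa_Ghat \<Phi> g I t) $ i * (\<Phi> (gbpa_Ghat \<Phi> g (I(Suc t := i)) (Suc t))
            - (\<Sum>s\<in>{1..Suc t}. g s $ (I(Suc t := i)) s)))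
          \<le> \<Phi> (gbpa_Ghat \<Phi> g I t) - (\<Sum>s\<in>{1..t}. g s $ I s) + real CARD('n) powr \<alpha> / (2 * \<eta> * \<alpha>)"
proof -
  let ?G = "gbpa_Ghat \<Phi> g I t" and ?S = "\<Sum>s\<in>{1..t}. g s $ I s"
  have losses_Suc: "(\<Sum>s\<in>{1..Suc t}. g s $ (I(Suc t := i)) s) = ?S + g (Suc t) $ i" for i
  proof -
    have "(\<Sum>s\<in>{1..t}. g s $ (I(Suc t := i)) s) = ?S" by (rule sum.cong) auto
    then show ?thesis by simp
  qed
  have "(\<Sum>i\<in>UNIV. \<pi> ?G $ i * (\<Phi> (gbpa_Ghat \<Phi> g (I(Suc t := i)) (Suc t))
        - (\<Sum>s\<in>{1..Suc t}. g s $ (I(Suc t := i)) s)))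
      = (\<Sum>i\<in>UNIV. \<pi> ?G $ i * (\<Phi> (?G + (g (Suc t) $ i / \<pi> ?G $ i) *\<^sub>R axis i 1) - g (Suc t) $ i)
          - \<pi> ?G $ i * ?S)"
    by (intro sum.cong refl) (simp only: gbpa_Ghat_Suc_fun_upd losses_Suc algebra_simps)
  also have "\<dots> = (\<Sum>i\<in>UNIV. \<pi> ?G $ i * (\<Phi> (?G + (g (Suc t) $ i / \<pi> ?G $ i) *\<^sub>R axis i 1)
      - g (Suc t) $ i)) - ?S"
    by (simp add: sum_subtractf argmax_sum flip: sum_distrib_right)
  also have "\<dots> \<le> \<Phi> ?G + real CARD('n) powr \<alpha> / (2 * \<eta> * \<alpha>) - ?S"
    using potential_drift[OF assms] by simp
  finally show ?thesis by simp
qed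

text \<open>Against the best arm \<open>k\<close>, the unbiased estimate \<open>\<hat>G\<^sub>T k\<close> is dominated by \<open>\<Phi>(\<hat>G\<^sub>T)\<close>.\<close>

lemma expected_regret_le:
  fixes g :: "nat \<Rightarrow> real^'n"
  shows "gbpa_expected_regret \<Phi> g T \<le> E g T (\<lambda>I. \<Phi> (gbpa_Ghat \<Phi> g I T) - (\<Sum>t\<in>{1..T}. g t $ I t))"
proof -
  define A where "A i = (\<Sum>t\<in>{1..T}. g t $ i)" for i
  define S where "S I = (\<Sum>t\<in>{1..T}. g t $ I t)" for I :: "nat \<Rightarrow> 'n"
  have "(MAX i\<in>UNIV. A i) \<in> range A" by (intro Max_in) auto
  then obtain k where k: "(MAX i\<in>UNIV. A i) = A k" by blast
  have "gbpa_expected_regret \<Phi> g T = E g T (\<lambda>I. A k - S I)"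
    unfolding gbpa_expected_regret_def gbpa_expectation_def regret_eq
    by (simp only: A_def[symmetric] S_def[symmetric] k)
  also have "\<dots> = A k - E g T S"
    by (subst gbpa_expectation_diff) (simp add: expectation_const)
  finally have regret: "gbpa_expected_regret \<Phi> g T = A k - E g T S" .
  have "A k = E g T (\<lambda>I. gbpa_Ghat \<Phi> g I T $ k)"
    by (simp add: expectation_Ghat A_def)
  also have "\<dots> \<le> E g T (\<lambda>I. \<Phi> (gbpa_Ghat \<Phi> g I T))"
    by (intro expectation_mono nth_le_potential)
  finally have "gbpa_expected_regret \<Phi> g T \<le> E g T (\<lambda>I. \<Phi> (gbpa_Ghat \<Phi> g I T)) - E g T S"
    unfolding regret by simp
  also have "\<dots> = E g T (\<lambda>I. \<Phi> (gbpa_Ghat \<Phi> g I T) - S I)"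
    by (simp add: gbpa_expectation_diff)
  finally show ?thesis unfolding S_def .
qed

lemma expectation_potential_le:
  fixes g :: "nat \<Rightarrow> real^'n"
  assumes "\<And>s i. 1 \<le> s \<Longrightarrow> s \<le> t \<Longrightarrow> -1 \<le> g s $ i \<and> g s $ i \<le> 0"
  shows "E g t (\<lambda>I. \<Phi> (gbpa_Ghat \<Phi> g I t) - (\<Sum>s\<in>{1..t}. g s $ I s))
           \<le> \<Phi> (0 :: real^'n) + real t * (real CARD('n) powr \<alpha> / (2 * \<eta> * \<alpha>))"
  using assms
proof (induction t)
  case (Suc t)
  define C where "C = real CARD('n) powr \<alpha> / (2 * \<eta> * \<alpha>)"
  have "-1 \<le> g (Suc t) $ i \<and> g (Suc t) $ i \<le> 0" for i using Suc.prems by simp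
  note conditional_potential_drift[of g t, OF this, folded C_def]
  then have "E g (Suc t) (\<lambda>I. \<Phi> (gbpa_Ghat \<Phi> g I (Suc t)) - (\<Sum>s\<in>{1..Suc t}. g s $ I s))
      \<le> E g t (\<lambda>I. \<Phi> (gbpa_Ghat \<Phi> g I t) - (\<Sum>s\<in>{1..t}. g s $ I s) + C)"
    unfolding expectation_Suc by (intro expectation_mono)
  also have "\<dots> = E g t (\<lambda>I. \<Phi> (gbpa_Ghat \<Phi> g I t) - (\<Sum>s\<in>{1..t}. g s $ I s)) + C"
    by (simp only: gbpa_expectation_add expectation_const)
  also have "\<dots> \<le> \<Phi> (0 :: real^'n) + real t * C + C"
    unfolding C_def using Suc by (intro add_right_mono Suc.IH) auto
  also have "\<dots> = \<Phi> (0 :: real^'n) + real (Suc t) * C" by (simp add: algebra_simps)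
  finally show ?case unfolding C_def .
qed (simp add: gbpa_expectation_0)

end

lemma tsallis_rate_eq:
  fixes T N \<alpha> \<eta> :: real
  assumes "0 < T" "0 < N" "0 < \<alpha>" "\<alpha> < 1"
    and \<eta>: "\<eta> = sqrt (T * (1 - \<alpha>) / (2 * \<alpha>)) * N powr (\<alpha> - 1/2)"
  shows "\<eta> * N powr (1 - \<alpha>) / (1 - \<alpha>) + T * (N powr \<alpha> / (2 * \<eta> * \<alpha>))
         = sqrt (2 * T * N / (\<alpha> * (1 - \<alpha>)))"
proof -
  define s where "s = sqrt (T * (1 - \<alpha>) / (2 * \<alpha>))"
  define r where "r = N powr (\<alpha> - 1/2)"
  have s: "0 < s" "s\<^sup>2 = T * (1 - \<alpha>) / (2 * \<alpha>)" using assms by (simp_all add: s_def)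
  have r: "0 < r" using assms(2) by (simp add: r_def)
  have "0 < 1 - \<alpha>" using assms(4) by simp
  have T_eq: "T = 2 * \<alpha> * s\<^sup>2 / (1 - \<alpha>)" using s assms(3,4) by (simp add: field_simps)
  have \<eta>_eq: "\<eta> = s * r" by (simp add: \<eta> s_def r_def)
  have "r * N powr (1 - \<alpha>) = sqrt N" "N powr \<alpha> = r * sqrt N"
    using assms(2) by (simp_all add: r_def powr_add[symmetric] powr_half_sqrt[symmetric])
  then have "\<eta> * N powr (1 - \<alpha>) / (1 - \<alpha>) + T * (N powr \<alpha> / (2 * \<eta> * \<alpha>))
      = s * sqrt N / (1 - \<alpha>) + T * sqrt N / (2 * s * \<alpha>)"
    using r s by (simp add: \<eta>_eq field_simps)
  also have "\<dots> = 2 * s * sqrt N / (1 - \<alpha>)"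
  proof -
    have "T * sqrt N / (2 * s * \<alpha>) = s * sqrt N / (1 - \<alpha>)"
      unfolding T_eq using s(1) assms(3) \<open>0 < 1 - \<alpha>\<close> by (simp add: field_simps power2_eq_square)
    then show ?thesis by simp
  qed
  also have "\<dots> = sqrt (2 * T * N / (\<alpha> * (1 - \<alpha>)))"
  proof (rule real_sqrt_unique[symmetric])
    show "(2 * s * sqrt N / (1 - \<alpha>))\<^sup>2 = 2 * T * N / (\<alpha> * (1 - \<alpha>))"
    proof -
      have "(2 * s * sqrt N / b)\<^sup>2 = 2 * (2 * \<alpha> * s\<^sup>2 / b) * N / (\<alpha> * b)" if "0 < b" for b
        using that assms(2,3) by (simp add: power_divide power_mult_distrib field_simps power2_eq_square)
      from this[OF \<open>0 < 1 - \<alpha>\<close>] show ?thesis unfolding T_eq .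
    qed
    show "0 \<le> 2 * s * sqrt N / (1 - \<alpha>)" using s assms by simp
  qed
  finally show ?thesis .
qed

theorem corollary1:
  fixes g :: "nat \<Rightarrow> real^'n" and T :: nat and \<alpha> \<eta> :: real
  assumes "CARD('n) \<ge> 2"
    and "T \<ge> 1"
    and "0 < \<alpha>" and "\<alpha> < 1"
    and "\<eta> = sqrt (real T * (1 - \<alpha>) / (2 * \<alpha>)) * real CARD('n) powr (\<alpha> - 1/2)"
    and "\<forall>t\<in>{1..T}. \<forall>i. -1 \<le> g t $ i \<and> g t $ i \<le> 0"
  shows "gbpa_expected_regret (tsallis_potential \<eta> \<alpha>) g T
           \<le> sqrt (2 * real T * real CARD('n) / (\<alpha> * (1 - \<alpha>)))"
proof -
  interpret tsallis_smoothing \<eta> \<alpha>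
    using assms(2-5) by unfold_locales auto
  have "gbpa_expected_regret \<Phi> g T \<le> E g T (\<lambda>I. \<Phi> (gbpa_Ghat \<Phi> g I T) - (\<Sum>t\<in>{1..T}. g t $ I t))"
    by (rule expected_regret_le)
  also have "\<dots> \<le> \<Phi> (0 :: real^'n) + real T * (real CARD('n) powr \<alpha> / (2 * \<eta> * \<alpha>))"
    using assms(6) by (intro expectation_potential_le) auto
  also have "\<dots> \<le> \<eta> * real CARD('n) powr (1 - \<alpha>) / (1 - \<alpha>)
      + real T * (real CARD('n) powr \<alpha> / (2 * \<eta> * \<alpha>))"
    using potential_zero_le by simp
  also have "\<dots> = sqrt (2 * real T * real CARD('n) / (\<alpha> * (1 - \<alpha>)))"
    using assms(2-5) by (intro tsallis_rate_eq) auto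
  finally show ?thesis .
qed

end
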